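(* Let $G$ be a connected graph with $n\ge 2$ vertices. If the maximum degree satisfies $\Delta(G)<n/2$, then $\frac{q(G)}{R(G)}<\frac{n}{\sqrt{n-1}}$.
   Context: All graphs are finite and simple; $\Delta(G)$ is the maximum degree. For a vertex $u$, $d(u)$ is its degree. The Randić index is $R(G)=\sum_{\{u,v\}\in E(G)} \frac{1}{\sqrt{d(u)d(v)}}$. The signless Laplacian is $Q=D+A$ ($D$ the diagonal degree matrix, $A$ the adjacency matrix), and $q(G)$ is its largest eigenvalue. *)

theory Defs
  imports "HOL-Analysis.Analysis"
begin

definition simple_graph :: "('a::finite \<Rightarrow> 'a \<Rightarrow> bool) \<Rightarrow> bool" where
  "simple_graph E \<longleftrightarrow> (\<forall>u v. E u v \<longleftrightarrow> E v u) \<and> (\<forall>u. \<not> E u u)"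

definition connected_graph :: "('a::finite \<Rightarrow> 'a \<Rightarrow> bool) \<Rightarrow> bool" where
  "connected_graph E \<longleftrightarrow> (\<forall>u v. (u, v) \<in> {(x, y). E x y}\<^sup>*)"

definition degree :: "('a::finite \<Rightarrow> 'a \<Rightarrow> bool) \<Rightarrow> 'a \<Rightarrow> nat" where
  "degree E u = card {v. E u v}"

definition max_degree :: "('a::finite \<Rightarrow> 'a \<Rightarrow> bool) \<Rightarrow> nat" where
  "max_degree E = Max (range (degree E))"

definition randic_index :: "('a::finite \<Rightarrow> 'a \<Rightarrow> bool) \<Rightarrow> real" where
  "randic_index E = (\<Sum>e\<in>{{u, v} | u v. E u v}.
      1 / sqrt (\<Prod>w\<in>e. real (degree E w)))"

definition adjacency_matrix :: "('a::finite \<Rightarrow> 'a \<Rightarrow> bool) \<Rightarrow> real^'a^'a" where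
  "adjacency_matrix E = (\<chi> i j. if E i j then 1 else 0)"

definition degree_matrix :: "('a::finite \<Rightarrow> 'a \<Rightarrow> bool) \<Rightarrow> real^'a^'a" where
  "degree_matrix E = (\<chi> i j. if i = j then real (degree E i) else 0)"

definition signless_laplacian :: "('a::finite \<Rightarrow> 'a \<Rightarrow> bool) \<Rightarrow> real^'a^'a" where
  "signless_laplacian E = degree_matrix E + adjacency_matrix E"

definition is_eigenvalue :: "real^'n^'n \<Rightarrow> real \<Rightarrow> bool" where
  "is_eigenvalue M c \<longleftrightarrow> (\<exists>x. x \<noteq> 0 \<and> M *v x = c *\<^sub>R x)"

text \<open>q(G): the largest eigenvalue of the signless Laplacian (real symmetric matrix,
  so all eigenvalues are real).\<close>
definition signless_spectral_radius :: "('a::finite \<Rightarrow> 'a \<Rightarrow> bool) \<Rightarrow> real" where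
  "signless_spectral_radius E = Max {c. is_eigenvalue (signless_laplacian E) c}"

end

theory Submission
  imports Defs
begin

text \<open>Every row of the signless Laplacian Q has absolute sum 2 d(i), so each eigenvalue satisfies
  |c| \<le> 2 \<Delta> (look at a coordinate of maximal modulus of an eigenvector); in particular q(G) \<le> 2 \<Delta>.
  For an edge uv with 1 \<le> d(u), d(v) \<le> \<Delta> one has
  1/\<surd>(d(u) d(v)) \<ge> \<surd>\<Delta>/(\<Delta>+1) (1/d(u) + 1/d(v)); summing over the edges, every vertex w
  contributes d(w) \<cdot> 1/d(w) = 1, so R(G) \<ge> n \<surd>\<Delta>/(\<Delta>+1). Hence q/R \<le> 2 (\<Delta>+1) \<surd>\<Delta> / n,
  and this is below n/\<surd>(n-1) as soon as 2\<Delta> + 1 \<le> n.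
  The maximum defining q(G) exists because Q is symmetric: a maximiser of the Rayleigh quotient on
  the unit sphere is an eigenvector, and eigenvectors of distinct eigenvalues are orthogonal, so
  there are only finitely many eigenvalues.\<close>

lemma symmetric_matrix_inner_commute:
  fixes M :: "real^'n^'n"
  assumes "transpose M = M"
  shows "x \<bullet> (M *v y) = (M *v x) \<bullet> y"
  by (metis assms dot_lmul_matrix vector_transpose_matrix)

lemma rayleigh_bound_attained_imp_eigenvector:
  fixes M :: "real^'n^'n"
  assumes sym: "transpose M = M"
    and bound: "\<And>y. y \<bullet> (M *v y) \<le> lam * (y \<bullet> y)"
    and attained: "x \<bullet> (M *v x) = lam * (x \<bullet> x)"
  shows "M *v x = lam *\<^sub>R x"
proof (rule ccontr)
  \<comment> \<open>moving from x along the residual z makes the nonnegative gap negative for small t > 0\<close>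
  define z where "z = M *v x - lam *\<^sub>R x"
  define gap where "gap = (\<lambda>y. lam * (y \<bullet> y) - y \<bullet> (M *v y))"
  assume "M *v x \<noteq> lam *\<^sub>R x"
  then have z_pos: "z \<bullet> z > 0" by (simp add: z_def)
  have gap_z_nonneg: "gap z \<ge> 0" using bound[of z] by (simp add: gap_def)
  define t where "t = (z \<bullet> z) / (gap z + 1)"
  have t_pos: "t > 0" using z_pos gap_z_nonneg by (simp add: t_def)
  have "gap (x + t *\<^sub>R z) = gap x - 2 * t * (z \<bullet> (M *v x) - lam * (z \<bullet> x)) + t\<^sup>2 * gap z"
    using symmetric_matrix_inner_commute[OF sym, of x z]
    by (simp add: gap_def algebra_simps inner_commute power2_eq_square)
  also have "z \<bullet> (M *v x) - lam * (z \<bullet> x) = z \<bullet> z"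
    by (simp add: z_def algebra_simps inner_commute)
  also have "gap x = 0" using attained by (simp add: gap_def)
  finally have gap_step: "gap (x + t *\<^sub>R z) = t * (t * gap z - 2 * (z \<bullet> z))"
    by (simp add: algebra_simps power2_eq_square)
  have "t * gap z \<le> z \<bullet> z" using z_pos gap_z_nonneg by (simp add: t_def field_simps)
  with z_pos have "t * gap z - 2 * (z \<bullet> z) < 0" by linarith
  with t_pos have "t * (t * gap z - 2 * (z \<bullet> z)) < 0" by (rule mult_pos_neg)
  then show False using gap_step bound[of "x + t *\<^sub>R z"] by (simp add: gap_def)
qed

lemma symmetric_matrix_has_eigenvalue:
  fixes M :: "real^'n^'n"
  assumes sym: "transpose M = M"
  shows "\<exists>c. is_eigenvalue M c"
proof -
  define f where "f = (\<lambda>x::real^'n. x \<bullet> (M *v x))"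
  have "axis undefined 1 \<in> sphere (0::real^'n) 1" by simp
  then have "sphere (0::real^'n) 1 \<noteq> {}" by blast
  moreover have "continuous_on (sphere 0 1) f" unfolding f_def by (intro continuous_intros)
  ultimately obtain x where x: "x \<in> sphere 0 1" and x_max: "\<And>u. u \<in> sphere 0 1 \<Longrightarrow> f u \<le> f x"
    using continuous_attains_sup[OF compact_sphere] by blast
  have bound: "y \<bullet> (M *v y) \<le> f x * (y \<bullet> y)" for y
  proof (cases "y = 0")
    case False
    define u where "u = (1 / norm y) *\<^sub>R y"
    have "y = norm y *\<^sub>R u" using False by (simp add: u_def)
    then have "y \<bullet> (M *v y) = (norm y)\<^sup>2 * f u"
      by (metis f_def inner_scaleR_left inner_scaleR_right matrix_vector_mult_scaleR mult.assoc power2_eq_square)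
    also have "\<dots> \<le> (norm y)\<^sup>2 * f x"
      using False by (intro mult_left_mono x_max) (simp_all add: u_def)
    finally show ?thesis by (simp add: power2_norm_eq_inner mult.commute)
  qed simp
  have "x \<bullet> x = 1" using x by (simp add: dot_square_norm)
  then have "M *v x = f x *\<^sub>R x"
    by (intro rayleigh_bound_attained_imp_eigenvector[OF sym bound]) (simp add: f_def)
  moreover have "x \<noteq> 0" using x by auto
  ultimately show ?thesis unfolding is_eigenvalue_def by blast
qed

lemma symmetric_matrix_finite_eigenvalues:
  fixes M :: "real^'n^'n"
  assumes sym: "transpose M = M"
  shows "finite {c. is_eigenvalue M c}"
proof -
  define S where "S = {c. is_eigenvalue M c}"
  define v where "v = (\<lambda>c. SOME x. x \<noteq> 0 \<and> M *v x = c *\<^sub>R x)"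
  have v: "v c \<noteq> 0 \<and> M *v v c = c *\<^sub>R v c" if "c \<in> S" for c
    using that someI_ex[of "\<lambda>x. x \<noteq> 0 \<and> M *v x = c *\<^sub>R x"]
    unfolding S_def is_eigenvalue_def v_def by auto
  have inj: "inj_on v S"
  proof (rule inj_onI)
    fix c d assume "c \<in> S" "d \<in> S" "v c = v d"
    then have "c *\<^sub>R v c = d *\<^sub>R v c" using v by metis
    then show "c = d" using v[OF \<open>c \<in> S\<close>] by (simp add: scaleR_cancel_right)
  qed
  have "pairwise orthogonal (v ` S)"
  proof (clarsimp simp: pairwise_def)
    fix c d assume c: "c \<in> S" and d: "d \<in> S" and "v c \<noteq> v d"
    then have "c \<noteq> d" by blast
    have "c * (v c \<bullet> v d) = v c \<bullet> (M *v v d)"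
      using v[OF c] symmetric_matrix_inner_commute[OF sym] by (metis inner_scaleR_left)
    also have "\<dots> = d * (v c \<bullet> v d)" using v[OF d] by simp
    finally show "orthogonal (v c) (v d)" using \<open>c \<noteq> d\<close> by (simp add: orthogonal_def)
  qed
  moreover have "0 \<notin> v ` S" using v by auto
  ultimately have "independent (v ` S)" by (rule pairwise_orthogonal_independent)
  then have "finite (v ` S)" using independent_bound by blast
  then show ?thesis using finite_imageD inj S_def by blast
qed

lemma symmetric_matrix_Max_eigenvalue:
  fixes M :: "real^'n^'n"
  assumes "transpose M = M"
  shows "is_eigenvalue M (Max {c. is_eigenvalue M c})"
  using Max_in[OF symmetric_matrix_finite_eigenvalues[OF assms]] symmetric_matrix_has_eigenvalue[OF assms]
  by blast

lemma simple_graph_sym: "simple_graph E \<Longrightarrow> E u v \<longleftrightarrow> E v u"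
  unfolding simple_graph_def by blast

lemma simple_graph_irrefl: "simple_graph E \<Longrightarrow> \<not> E u u"
  unfolding simple_graph_def by blast

lemma degree_le_max_degree: "degree E u \<le> max_degree E"
  unfolding max_degree_def by (rule Max_ge) auto

lemma connected_graph_degree_pos:
  fixes E :: "'a::finite \<Rightarrow> 'a \<Rightarrow> bool"
  assumes "connected_graph E" and "2 \<le> CARD('a)"
  shows "0 < degree E u"
proof -
  obtain v :: 'a where "v \<noteq> u"
    using assms(2) by (metis UNIV_I card_le_Suc0_iff_eq not_less_eq_eq numeral_2_eq_2 finite)
  moreover have "(u, v) \<in> {(x, y). E x y}\<^sup>*"
    using assms(1) unfolding connected_graph_def by blast
  ultimately obtain w where "E u w" by (blast elim: converse_rtranclE)
  then show ?thesis unfolding degree_def by (auto simp: card_gt_0_iff)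
qed

lemma signless_laplacian_symmetric:
  "simple_graph E \<Longrightarrow> transpose (signless_laplacian E) = signless_laplacian E"
  unfolding signless_laplacian_def degree_matrix_def adjacency_matrix_def transpose_def
  by (simp add: vec_eq_iff simple_graph_sym)

lemma signless_laplacian_mult_nth:
  "(signless_laplacian E *v x) $ i = real (degree E i) * x $ i + (\<Sum>j\<in>{j. E i j}. x $ j)"
proof -
  have "(signless_laplacian E *v x) $ i
      = (\<Sum>j\<in>UNIV. (if i = j then real (degree E i) * x $ j else 0) + (if E i j then x $ j else 0))"
    unfolding signless_laplacian_def degree_matrix_def adjacency_matrix_def matrix_vector_mult_def
    by (auto simp: distrib_right intro: sum.cong)
  then show ?thesis by (simp add: sum.distrib sum.inter_filter[symmetric])
qed

lemma signless_laplacian_eigenvalue_abs_le: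
  assumes "is_eigenvalue (signless_laplacian E) c"
  shows "\<bar>c\<bar> \<le> 2 * real (max_degree E)"
proof -
  obtain x where "x \<noteq> 0" and eigen: "signless_laplacian E *v x = c *\<^sub>R x"
    using assms unfolding is_eigenvalue_def by blast
  obtain i where i_max: "\<And>j. \<bar>x $ j\<bar> \<le> \<bar>x $ i\<bar>"
    using Max_in[of "range (\<lambda>j. \<bar>x $ j\<bar>)"] Max_ge[of "range (\<lambda>j. \<bar>x $ j\<bar>)"] by fastforce
  obtain k where "x $ k \<noteq> 0" using \<open>x \<noteq> 0\<close> by (metis vec_eq_iff zero_index)
  then have "0 < \<bar>x $ i\<bar>" using i_max[of k] by linarith
  define d where "d = real (degree E i)"
  have "\<bar>\<Sum>j\<in>{j. E i j}. x $ j\<bar> \<le> (\<Sum>j\<in>{j. E i j}. \<bar>x $ j\<bar>)" by (rule sum_abs)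
  also have "\<dots> \<le> d * \<bar>x $ i\<bar>"
    using sum_bounded_above[of "{j. E i j}" "\<lambda>j. \<bar>x $ j\<bar>", OF i_max] by (simp add: d_def degree_def)
  finally have neighbours: "\<bar>\<Sum>j\<in>{j. E i j}. x $ j\<bar> \<le> d * \<bar>x $ i\<bar>" .
  have "\<bar>c\<bar> * \<bar>x $ i\<bar> = \<bar>d * x $ i + (\<Sum>j\<in>{j. E i j}. x $ j)\<bar>"
    using arg_cong[OF eigen, of "\<lambda>y. \<bar>y $ i\<bar>"] by (simp add: signless_laplacian_mult_nth d_def abs_mult)
  also have "\<dots> \<le> (2 * d) * \<bar>x $ i\<bar>"
    using neighbours abs_triangle_ineq[of "d * x $ i"] by (simp add: d_def abs_mult)
  finally have "\<bar>c\<bar> \<le> 2 * d" using \<open>0 < \<bar>x $ i\<bar>\<close> by (simp add: mult_le_cancel_right)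
  also have "d \<le> real (max_degree E)" using degree_le_max_degree by (simp add: d_def)
  finally show ?thesis by simp
qed

lemma signless_spectral_radius_le:
  "simple_graph E \<Longrightarrow> signless_spectral_radius E \<le> 2 * real (max_degree E)"
  unfolding signless_spectral_radius_def
  using signless_laplacian_eigenvalue_abs_le
    symmetric_matrix_Max_eigenvalue[OF signless_laplacian_symmetric] by fastforce

lemma inverse_sqrt_mult_ge:
  fixes a b D :: real
  assumes "1 \<le> a" "a \<le> D" "1 \<le> b" "b \<le> D"
  shows "sqrt D / (D + 1) * (1 / a + 1 / b) \<le> 1 / sqrt (a * b)"
proof -
  define s x y where "s = sqrt D" and "x = sqrt a" and "y = sqrt b"
  have x: "1 \<le> x" "x \<le> s" and y: "1 \<le> y" "y \<le> s"
    using assms by (auto simp: s_def x_def y_def)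
  have squares: "a = x\<^sup>2" "b = y\<^sup>2" "D = s\<^sup>2"
    using assms by (simp_all add: s_def x_def y_def)
  \<comment> \<open>after clearing denominators the claim is (s x - y) (s y - x) \<ge> 0\<close>
  have "s * 1 \<le> s * x" "s * 1 \<le> s * y" using x y by (intro mult_left_mono; simp)+
  then have "0 \<le> s * x - y" "0 \<le> s * y - x" using x y by linarith+
  then have "0 \<le> (s * x - y) * (s * y - x)" by (rule mult_nonneg_nonneg)
  then have key: "s * (x\<^sup>2 + y\<^sup>2) \<le> (s\<^sup>2 + 1) * (x * y)"
    by (simp add: algebra_simps power2_eq_square)
  have pos: "0 < x" "0 < y" "0 < s\<^sup>2 + 1" using x y by (auto intro: add_nonneg_pos)
  have "sqrt D / (D + 1) * (1 / a + 1 / b) = s * (x\<^sup>2 + y\<^sup>2) / ((s\<^sup>2 + 1) * (x * y)\<^sup>2)"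
    using pos unfolding s_def[symmetric] unfolding squares by (simp add: field_simps power2_eq_square)
  also have "\<dots> \<le> (s\<^sup>2 + 1) * (x * y) / ((s\<^sup>2 + 1) * (x * y)\<^sup>2)"
    using key pos by (intro divide_right_mono) auto
  also have "\<dots> = 1 / sqrt (a * b)"
    using pos by (simp add: x_def y_def real_sqrt_mult power2_eq_square)
  finally show ?thesis .
qed

definition graph_edges :: "('a::finite \<Rightarrow> 'a \<Rightarrow> bool) \<Rightarrow> 'a set set" where
  "graph_edges E = {{u, v} | u v. E u v}"

lemma card_incident_edges:
  assumes "simple_graph E"
  shows "card {e \<in> graph_edges E. w \<in> e} = degree E w"
proof -
  have "{e \<in> graph_edges E. w \<in> e} = (\<lambda>v. {w, v}) ` {v. E w v}"
    using simple_graph_sym[OF assms] unfolding graph_edges_def by (auto simp: insert_commute)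
  moreover have "inj_on (\<lambda>v. {w, v}) {v. E w v}"
    using simple_graph_irrefl[OF assms] by (auto intro: inj_onI simp: doubleton_eq_iff)
  ultimately show ?thesis by (simp add: card_image degree_def)
qed

lemma sum_graph_edges_sum_endpoints:
  fixes f :: "'a::finite \<Rightarrow> 'b::comm_semiring_1"
  assumes "simple_graph E"
  shows "(\<Sum>e\<in>graph_edges E. \<Sum>w\<in>e. f w) = (\<Sum>w\<in>UNIV. of_nat (degree E w) * f w)"
proof -
  have "(\<Sum>e\<in>graph_edges E. \<Sum>w\<in>e. f w) = (\<Sum>e\<in>graph_edges E. \<Sum>w\<in>UNIV. if w \<in> e then f w else 0)"
    by (simp add: sum.If_cases)
  also have "\<dots> = (\<Sum>w\<in>UNIV. \<Sum>e\<in>graph_edges E. if w \<in> e then f w else 0)"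
    by (rule sum.swap)
  also have "\<dots> = (\<Sum>w\<in>UNIV. of_nat (card {e \<in> graph_edges E. w \<in> e}) * f w)"
    by (simp add: sum.If_cases Int_def conj_commute)
  finally show ?thesis by (simp add: card_incident_edges[OF assms])
qed

lemma randic_index_ge:
  fixes E :: "'a::finite \<Rightarrow> 'a \<Rightarrow> bool"
  assumes sg: "simple_graph E" and deg_pos: "\<And>u. 0 < degree E u"
  shows "sqrt (real (max_degree E)) / (real (max_degree E) + 1) * real CARD('a) \<le> randic_index E"
proof -
  define D where "D = real (max_degree E)"
  define d where "d = (\<lambda>w. real (degree E w))"
  have d_bounds: "1 \<le> d w" "d w \<le> D" for w
    using deg_pos[of w] degree_le_max_degree[of E w] by (simp_all add: d_def D_def)
  have edge_bound: "sqrt D / (D + 1) * (\<Sum>w\<in>e. 1 / d w) \<le> 1 / sqrt (\<Prod>w\<in>e. d w)"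
    if edge: "e \<in> graph_edges E" for e
  proof -
    obtain u v where e: "e = {u, v}" and "E u v" using edge unfolding graph_edges_def by blast
    then have "u \<noteq> v" using simple_graph_irrefl[OF sg] by blast
    then show ?thesis unfolding e using inverse_sqrt_mult_ge d_bounds by simp
  qed
  have "d w * (1 / d w) = 1" for w using d_bounds(1)[of w] by simp
  then have "sqrt D / (D + 1) * real CARD('a) = sqrt D / (D + 1) * (\<Sum>w\<in>UNIV. d w * (1 / d w))"
    by simp
  also have "\<dots> = sqrt D / (D + 1) * (\<Sum>e\<in>graph_edges E. \<Sum>w\<in>e. 1 / d w)"
    by (simp only: sum_graph_edges_sum_endpoints[OF sg] d_def)
  also have "\<dots> = (\<Sum>e\<in>graph_edges E. sqrt D / (D + 1) * (\<Sum>w\<in>e. 1 / d w))"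
    by (rule sum_distrib_left)
  also have "\<dots> \<le> (\<Sum>e\<in>graph_edges E. 1 / sqrt (\<Prod>w\<in>e. d w))"
    by (rule sum_mono) (rule edge_bound)
  also have "\<dots> = randic_index E" by (simp add: randic_index_def graph_edges_def d_def)
  finally show ?thesis by (simp add: D_def)
qed

lemma sqrt_degree_ratio_lt:
  fixes D N :: real
  assumes D: "1 \<le> D" and DN: "2 * D \<le> N - 1"
  shows "2 * (D + 1) * sqrt D / N < N / sqrt (N - 1)"
proof -
  have N: "3 \<le> N" using assms by linarith
  have "(2 * (D + 1))\<^sup>2 * (D * (N - 1)) \<le> (N + 1)\<^sup>2 * ((N - 1) / 2 * (N - 1))"
    using assms by (intro mult_mono power_mono) auto
  also have "\<dots> = (N\<^sup>2 - 1)\<^sup>2 / 2" by (simp add: power2_eq_square algebra_simps)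
  also have "\<dots> < (N\<^sup>2)\<^sup>2"
  proof -
    have "(N\<^sup>2 - 1)\<^sup>2 \<le> (N\<^sup>2)\<^sup>2" using N by (intro power_mono) auto
    moreover have "0 < (N\<^sup>2)\<^sup>2" using N by simp
    ultimately show ?thesis by linarith
  qed
  finally have "sqrt ((2 * (D + 1))\<^sup>2 * (D * (N - 1))) < sqrt ((N\<^sup>2)\<^sup>2)"
    by (rule real_sqrt_less_mono)
  moreover have "sqrt ((2 * (D + 1))\<^sup>2 * (D * (N - 1))) = 2 * (D + 1) * sqrt D * sqrt (N - 1)"
    using D by (simp add: real_sqrt_mult)
  ultimately have "2 * (D + 1) * sqrt D * sqrt (N - 1) < N * N"
    by (simp add: power2_eq_square)
  moreover have "0 < sqrt (N - 1)" "0 < N" using N by auto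
  ultimately show ?thesis by (simp add: divide_less_eq less_divide_eq mult.commute mult.left_commute)
qed

theorem lemma3p4:
  fixes E :: "'a::finite \<Rightarrow> 'a \<Rightarrow> bool"
  assumes "simple_graph E"
    and "connected_graph E"
    and "CARD('a) \<ge> 2"
    and "real (max_degree E) < real CARD('a) / 2"
  shows "signless_spectral_radius E / randic_index E
           < real CARD('a) / sqrt (real CARD('a) - 1)"
proof -
  define D N where "D = real (max_degree E)" and "N = real CARD('a)"
  have deg_pos: "\<And>u. 0 < degree E u" using connected_graph_degree_pos assms(2,3) by blast
  have "1 \<le> degree E undefined" using deg_pos by (simp add: Suc_le_eq)
  then have D: "1 \<le> D" using le_trans[OF _ degree_le_max_degree] by (simp add: D_def)
  have "2 * max_degree E < CARD('a)" using assms(4) by linarith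
  then have DN: "2 * D \<le> N - 1" unfolding D_def N_def by linarith
  have R: "sqrt D / (D + 1) * N \<le> randic_index E"
    unfolding D_def N_def using randic_index_ge[OF assms(1) deg_pos] .
  have "0 < sqrt D / (D + 1) * N" using D assms(3) by (simp add: N_def)
  then have "signless_spectral_radius E / randic_index E \<le> 2 * D / (sqrt D / (D + 1) * N)"
    using signless_spectral_radius_le[OF assms(1)] R D by (intro frac_le) (simp_all add: D_def)
  also have "\<dots> = 2 * (D + 1) * (D / sqrt D) / N"
    using D by (simp add: field_simps)
  also have "\<dots> = 2 * (D + 1) * sqrt D / N"
    using D by (simp add: real_div_sqrt)
  also have "\<dots> < N / sqrt (N - 1)" using D DN by (rule sqrt_degree_ratio_lt)
  finally show ?thesis unfolding N_def .
qed

end
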